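(* Let $n\ge1$. Let $\mathcal{H}=\mathcal{K}=\mathbb{C}^2$, with computational basis $\{|0\rangle,|1\rangle\}$ of $\mathcal{H}$ and an orthonormal basis $\{|+\rangle,|-\rangle\}$ of $\mathcal{K}$. For parameters $\theta_m\in[0,1]$, $\phi_m\in\mathbb{R}$, $\eta_m\in(0,1)$ ($m=0,\dots,n$), observations $q_0,\dots,q_n\in\mathcal{P}_1(\mathcal{K})$ and a state $\varphi_{H,0}$ on $M_2(\mathbb{C})$, define for $(p_0,\dots,p_n)\in\mathcal{P}_1(\mathcal{H})^{n+1}$ \[ F_n(p_0,\dots,p_n)=\varphi_{H,0}\Big(\mathcal{E}_{H;0}\big(\mathcal{E}_{H,O;0}(p_0\otimes q_0)\otimes\mathcal{E}_{H;1}(\mathcal{E}_{H,O;1}(p_1\otimes q_1)\otimes\cdots\otimes\mathcal{E}_{H;n}(\mathcal{E}_{H,O;n}(p_n\otimes q_n)\otimes\mathbb{I})\cdots)\big)\Big), \] with the maps $\mathcal{E}_{H;m},\mathcal{E}_{H,O;m}$ as in the context. Then there exist such parameters, observations and initial state with \[ \sup_{p_0,\dots,p_n\in\mathcal{P}_1(\mathcal{H})}F_n(p_0,\dots,p_n)>\sup_{p_0,\dots,p_n\in D_H}F_n(p_0,\dots,p_n),\qquad D_H=\{|0\rangle\langle0|,|1\rangle\langle1|\}, \] and moreover in any tuple $(p_0^*,\dots,p_n^* )$ attaining the supremum on the left, $p_0^*$ has a nonzero off-diagonal entry in the computational basis.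
   Context: $\mathcal{P}_1(\mathcal{H})$ is the set of rank-one orthogonal projections on $\mathcal{H}$. For each $m$: $\sigma_x=|0\rangle\langle1|+|1\rangle\langle0|$, $U_m=e^{-i\phi_m\sigma_x}$, $\Pi_Z(X)=|0\rangle\langle0|X|0\rangle\langle0|+|1\rangle\langle1|X|1\rangle\langle1|$, $\Phi_m(X)=(1-\theta_m)U_m^\dagger XU_m+\theta_m\Pi_Z(X)$, and $\mathcal{E}_{H;m}:M_2\otimes M_2\to M_2$, $\mathcal{E}_{H;m}(X_1\otimes X_2)=\Phi_m(X_1)\,\mathrm{tr}(X_2)$ with $\mathrm{tr}=\tfrac12\operatorname{Tr}$ the normalized trace. Let $L_m^+=\sqrt{1+\eta_m}\,|0\rangle\langle0|+\sqrt{1-\eta_m}\,|1\rangle\langle1|$, $L_m^-=\sqrt{1-\eta_m}\,|0\rangle\langle0|+\sqrt{1+\eta_m}\,|1\rangle\langle1|$, $W_m^\pm:\mathcal{H}\to\mathcal{H}\otimes\mathcal{K}$, $W_m^\pm\xi=L_m^\pm\xi\otimes|\pm\rangle$, and $\mathcal{E}_{H,O;m}(X)=(W_m^+)^\dagger XW_m^++(W_m^-)^\dagger XW_m^-$ for $X\in\mathcal{B}(\mathcal{H})\otimes\mathcal{B}(\mathcal{K})$; in particular $\mathcal{E}_{H,O;m}(A\otimes|\pm\rangle\langle\pm|)=L_m^\pm AL_m^\pm$. *)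

theory Defs
  imports "HOL-Analysis.Analysis"
begin

type_synonym cvec = "complex^2"
type_synonym cmat = "complex^2^2"
type_synonym tmat = "complex^(2\<times>2)^(2\<times>2)"

definition ket0 :: cvec where "ket0 = axis 0 1"
definition ket1 :: cvec where "ket1 = axis 1 1"

definition outer :: "complex^'n \<Rightarrow> complex^'n \<Rightarrow> complex^'n^'n" where
  "outer u v = (\<chi> i j. u$i * cnj (v$j))"

definition adj :: "complex^'n^'m \<Rightarrow> complex^'m^'n" where
  "adj A = (\<chi> i j. cnj (A$j$i))"

definition csmult :: "complex \<Rightarrow> complex^'n^'m \<Rightarrow> complex^'n^'m" where
  "csmult c A = (\<chi> i j. c * A$i$j)"

definition cinner :: "complex^'n \<Rightarrow> complex^'n \<Rightarrow> complex" where
  "cinner u v = (\<Sum>i\<in>UNIV. cnj (u$i) * v$i)"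

definition P1 :: "cmat set" where
  "P1 = {outer v v | v. norm v = 1}"

definition DH :: "cmat set" where
  "DH = {outer ket0 ket0, outer ket1 ket1}"

definition sigma_x :: cmat where
  "sigma_x = outer ket0 ket1 + outer ket1 ket0"

text \<open>U = exp(-i phi sigma_x) = cos phi I - i sin phi sigma_x (as sigma_x^2 = I)\<close>
definition Uop :: "real \<Rightarrow> cmat" where
  "Uop ph = csmult (complex_of_real (cos ph)) (mat 1) - csmult (\<i> * complex_of_real (sin ph)) sigma_x"

definition PiZ :: "cmat \<Rightarrow> cmat" where
  "PiZ X = outer ket0 ket0 ** X ** outer ket0 ket0 + outer ket1 ket1 ** X ** outer ket1 ket1"

definition Phi :: "real \<Rightarrow> real \<Rightarrow> cmat \<Rightarrow> cmat" where
  "Phi th ph X = (1 - th) *\<^sub>R (adj (Uop ph) ** X ** Uop ph) + th *\<^sub>R PiZ X"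

text \<open>Kronecker product of 2x2 matrices, M_2 \<otimes> M_2 = matrices indexed by 2\<times>2\<close>
definition kron :: "cmat \<Rightarrow> cmat \<Rightarrow> tmat" where
  "kron A B = (\<chi> ij kl. A$(fst ij)$(fst kl) * B$(snd ij)$(snd kl))"

definition ptr2 :: "tmat \<Rightarrow> cmat" where
  "ptr2 X = (\<chi> i k. (\<Sum>j\<in>UNIV. X$(i,j)$(k,j)) / 2)"

text \<open>E_{H;m}: linear extension of X1 \<otimes> X2 \<mapsto> Phi(X1) tr(X2)\<close>
definition EH :: "real \<Rightarrow> real \<Rightarrow> tmat \<Rightarrow> cmat" where
  "EH th ph X = Phi th ph (ptr2 X)"

definition Lp :: "real \<Rightarrow> cmat" where
  "Lp et = sqrt (1 + et) *\<^sub>R outer ket0 ket0 + sqrt (1 - et) *\<^sub>R outer ket1 ket1"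
definition Lm :: "real \<Rightarrow> cmat" where
  "Lm et = sqrt (1 - et) *\<^sub>R outer ket0 ket0 + sqrt (1 + et) *\<^sub>R outer ket1 ket1"

text \<open>isometry W: xi \<mapsto> L xi \<otimes> e, as a (2\<times>2) x 2 matrix\<close>
definition Wop :: "cmat \<Rightarrow> cvec \<Rightarrow> complex^2^(2\<times>2)" where
  "Wop L e = (\<chi> ij k. L$(fst ij)$k * e$(snd ij))"

definition EHO :: "real \<Rightarrow> cvec \<Rightarrow> cvec \<Rightarrow> tmat \<Rightarrow> cmat" where
  "EHO et ep em X = adj (Wop (Lp et) ep) ** X ** Wop (Lp et) ep
                  + adj (Wop (Lm et) em) ** X ** Wop (Lm et) em"

definition cstate :: "(cmat \<Rightarrow> complex) \<Rightarrow> bool" where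
  "cstate f \<longleftrightarrow> (\<forall>A B. f (A + B) = f A + f B) \<and> (\<forall>c A. f (csmult c A) = c * f A)
     \<and> (\<forall>A::cmat. Im (f (adj A ** A)) = 0 \<and> Re (f (adj A ** A)) \<ge> 0) \<and> f (mat 1) = 1"

primrec chain :: "(nat \<Rightarrow> real) \<Rightarrow> (nat \<Rightarrow> real) \<Rightarrow> (nat \<Rightarrow> real) \<Rightarrow> cvec \<Rightarrow> cvec
   \<Rightarrow> (nat \<Rightarrow> cmat) \<Rightarrow> (nat \<Rightarrow> cmat) \<Rightarrow> nat \<Rightarrow> nat \<Rightarrow> cmat" where
  "chain th ph et ep em q ps 0 m =
     EH (th m) (ph m) (kron (EHO (et m) ep em (kron (ps m) (q m))) (mat 1))"
| "chain th ph et ep em q ps (Suc r) m =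
     EH (th m) (ph m) (kron (EHO (et m) ep em (kron (ps m) (q m))) (chain th ph et ep em q ps r (Suc m)))"

definition Fn :: "nat \<Rightarrow> (nat \<Rightarrow> real) \<Rightarrow> (nat \<Rightarrow> real) \<Rightarrow> (nat \<Rightarrow> real) \<Rightarrow> cvec \<Rightarrow> cvec
   \<Rightarrow> (nat \<Rightarrow> cmat) \<Rightarrow> (cmat \<Rightarrow> complex) \<Rightarrow> (nat \<Rightarrow> cmat) \<Rightarrow> complex" where
  "Fn n th ph et ep em q phi0 ps = phi0 (chain th ph et ep em q ps n 0)"

end

theory Submission
  imports Defs
begin

(*
  For theta = phi = 0 the map E_H sends X \<otimes> Y to tr(Y) X, so the nested expression collapses to
  2^-n E_HO(p_0 \<otimes> q_0) as soon as every p_m has trace one.  If the observation is the projection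
  onto (|+> + |->)/sqrt 2, then E_HO(p \<otimes> q) = (L+ p L+ + L- p L-)/2 keeps the diagonal of p and
  damps its off-diagonal entries by sqrt(1 - eta^2).  In the vector state of (|0> + |1>)/sqrt 2
  this gives F_n = 2^-(n+1) (1 + 2 sqrt(1 - eta^2) Re (p_0)_01), which is maximal exactly when
  Re (p_0)_01 = 1/2, whereas diagonal projections only reach 2^-(n+1).
*)

lemma UNIV_2_eq: "(UNIV :: 2 set) = {0, 1}"
  using UNIV_2 by auto

lemma sum_2: "(\<Sum>i\<in>UNIV. f i) = f (0::2) + f 1"
  by (simp add: UNIV_2_eq)

lemma sum_2x2: "(\<Sum>ij\<in>UNIV. f ij) = f (0::2, 0::2) + f (0, 1) + f (1, 0) + f (1, 1)"
  by (simp add: UNIV_Times_UNIV[symmetric] UNIV_2_eq sum.cartesian_product[symmetric] add.assoc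
      del: UNIV_Times_UNIV)

lemma forall_2_eq: "(\<forall>i::2. P i) \<longleftrightarrow> P 0 \<and> P 1"
  by (metis UNIV_2_eq UNIV_I insertE singletonD)

lemma cmat_eq_iff:
  "A = B \<longleftrightarrow> A$0$0 = B$0$0 \<and> A$0$1 = B$0$1 \<and> A$1$0 = B$1$0 \<and> A$1$1 = B$1$1"
  for A B :: cmat
  by (auto simp: vec_eq_iff forall_2_eq)

lemma cinner_self: "cinner u u = of_real ((norm u)\<^sup>2)"
  for u :: "complex^'n"
proof -
  have "cinner u u = of_real (\<Sum>i\<in>UNIV. (cmod (u$i))\<^sup>2)"
    by (simp add: cinner_def mult.commute flip: complex_norm_square)
  then show ?thesis
    by (simp add: norm_vec_def L2_set_def sum_nonneg)
qed

lemma cinner_commute: "cinner v u = cnj (cinner u v)"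
  by (simp add: cinner_def mult.commute)

lemma cinner_add_right: "cinner u (v + w) = cinner u v + cinner u w"
  by (simp add: cinner_def distrib_left sum.distrib)

lemma cinner_add_left: "cinner (u + v) w = cinner u w + cinner v w"
  by (simp add: cinner_def distrib_right sum.distrib)

lemma cinner_scaleR_right: "cinner u (r *\<^sub>R v) = of_real r * cinner u v"
  unfolding cinner_def by (simp add: sum_distrib_left) (simp add: scaleR_conv_of_real mult_ac)

lemma cinner_scaleR_left: "cinner (r *\<^sub>R u) v = of_real r * cinner u v"
  unfolding cinner_def by (simp add: sum_distrib_left) (simp add: scaleR_conv_of_real mult_ac)

lemma cinner_adj_mult: "cinner u (adj A *v v) = cinner (A *v u) v"
  unfolding cinner_def adj_def matrix_vector_mult_def
  by (simp add: sum_distrib_left sum_distrib_right mult_ac) (rule sum.swap)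

lemma outer_mult_vec: "outer u v *v w = cinner v w *s u"
  by (simp add: outer_def cinner_def matrix_vector_mult_def vec_eq_iff sum_distrib_left mult_ac)

lemma cinner_scalar_mult_right: "cinner u (c *s v) = c * cinner u v"
  by (simp add: cinner_def sum_distrib_left mult_ac)

lemma trace_outer: "trace (outer u v) = cinner v u"
  by (simp add: trace_def outer_def cinner_def mult.commute)

lemma trace_csmult: "trace (csmult c A) = c * trace A"
  by (simp add: trace_def csmult_def sum_distrib_left)

lemma adj_mat_1: "adj (mat 1) = mat 1"
  by (simp add: adj_def mat_def vec_eq_iff)

lemma norm_cvec_sq: "(norm u)\<^sup>2 = (cmod (u$0))\<^sup>2 + (cmod (u$1))\<^sup>2"
  for u :: cvec
  by (simp add: norm_vec_def L2_set_def sum_2)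

lemma P1_trace: "p \<in> P1 \<Longrightarrow> trace p = 1"
  by (auto simp: P1_def trace_outer cinner_self)

lemma P1_hermitian: "p \<in> P1 \<Longrightarrow> p$1$0 = cnj (p$0$1)"
  by (auto simp: P1_def outer_def)

lemma P1_Re_offdiag_le: "p \<in> P1 \<Longrightarrow> Re (p$0$1) \<le> 1/2"
proof -
  assume "p \<in> P1"
  then obtain u :: cvec where p: "p = outer u u" and u: "norm u = 1"
    by (auto simp: P1_def)
  have "Re (p$0$1) \<le> cmod (u$0) * cmod (u$1)"
    using complex_Re_le_cmod[of "u$0 * cnj (u$1)"] by (simp add: p outer_def norm_mult)
  also have "\<dots> \<le> ((cmod (u$0))\<^sup>2 + (cmod (u$1))\<^sup>2) / 2"
    using sum_squares_bound[of "cmod (u$0)" "cmod (u$1)"] by simp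
  also have "\<dots> = 1/2"
    using u by (simp flip: norm_cvec_sq)
  finally show ?thesis .
qed

lemma Uop_0: "Uop 0 = mat 1"
  by (simp add: Uop_def csmult_def vec_eq_iff mat_def)

lemma Phi_0_0: "Phi 0 0 X = X"
  by (simp add: Phi_def Uop_0 adj_mat_1)

lemma ptr2_kron: "ptr2 (kron A B) = csmult (trace B / 2) A"
  by (simp add: ptr2_def kron_def csmult_def trace_def vec_eq_iff sum_distrib_left mult.commute)

lemma EH_0_0_kron: "EH 0 0 (kron A B) = csmult (trace B / 2) A"
  by (simp add: EH_def Phi_0_0 ptr2_kron)

lemma Wop_sandwich_kron:
  "adj (Wop L e) ** kron p q ** Wop L e = csmult (cinner e (q *v e)) (adj L ** p ** L)"
  unfolding cmat_eq_iff
  by (simp add: adj_def Wop_def kron_def csmult_def cinner_def matrix_matrix_mult_def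
      matrix_vector_mult_def sum_2 sum_2x2) algebra

lemma adj_Lp: "adj (Lp et) = Lp et" and adj_Lm: "adj (Lm et) = Lm et"
  by (simp_all add: cmat_eq_iff adj_def Lp_def Lm_def outer_def ket0_def ket1_def axis_def)

lemma EHO_kron: "EHO et ep em (kron p q) =
    csmult (cinner ep (q *v ep)) (Lp et ** p ** Lp et) + csmult (cinner em (q *v em)) (Lm et ** p ** Lm et)"
  by (simp add: EHO_def Wop_sandwich_kron adj_Lp adj_Lm)

definition dephase :: "real \<Rightarrow> cmat \<Rightarrow> cmat" where
  "dephase c p = (\<chi> k l. if k = l then p$k$l else of_real c * p$k$l)"

lemma trace_dephase: "trace (dephase c p) = trace p"
  by (simp add: trace_def dephase_def)

lemma EHO_kron_balanced:
  assumes "\<bar>et\<bar> \<le> 1" and "cinner ep (q *v ep) = 1/2" and "cinner em (q *v em) = 1/2"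
  shows "EHO et ep em (kron p q) = dephase (sqrt (1 - et\<^sup>2)) p"
proof -
  define sp where "sp = complex_of_real (sqrt (1 + et))"
  define sm where "sm = complex_of_real (sqrt (1 - et))"
  have "sp * sp = 1 + of_real et" "sm * sm = 1 - of_real et"
    using assms(1) by (simp_all add: sp_def sm_def flip: of_real_mult)
  moreover have "sp * sm = of_real (sqrt (1 - et\<^sup>2))"
    by (simp add: sp_def sm_def power2_eq_square algebra_simps flip: of_real_mult real_sqrt_mult)
  moreover have "Lp et = (\<chi> k l. if k = l then (if k = 0 then sp else sm) else 0)"
    "Lm et = (\<chi> k l. if k = l then (if k = 0 then sm else sp) else 0)"
    by (simp_all add: cmat_eq_iff Lp_def Lm_def outer_def ket0_def ket1_def axis_def sp_def sm_def
        of_real_def)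
  ultimately show ?thesis
    unfolding EHO_kron assms(2,3) cmat_eq_iff
    by (simp add: dephase_def csmult_def matrix_matrix_mult_def sum_2) algebra
qed

lemma chain_dephase:
  assumes balanced: "\<And>k. \<bar>et k\<bar> \<le> 1 \<and> cinner ep (q k *v ep) = 1/2 \<and> cinner em (q k *v em) = 1/2"
    and traces: "\<And>k. m \<le> k \<Longrightarrow> k \<le> m + r \<Longrightarrow> trace (ps k) = 1"
  shows "chain (\<lambda>_. 0) (\<lambda>_. 0) et ep em q ps r m
    = csmult ((1/2)^r) (dephase (sqrt (1 - (et m)\<^sup>2)) (ps m))"
  using traces
proof (induction r arbitrary: m)
  case 0
  then show ?case
    by (simp add: EH_0_0_kron EHO_kron_balanced balanced trace_I)
next
  case (Suc r)
  have "chain (\<lambda>_. 0) (\<lambda>_. 0) et ep em q ps r (Suc m)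
      = csmult ((1/2)^r) (dephase (sqrt (1 - (et (Suc m))\<^sup>2)) (ps (Suc m)))"
    using Suc.prems by (intro Suc.IH) auto
  then have "trace (chain (\<lambda>_. 0) (\<lambda>_. 0) et ep em q ps r (Suc m)) = (1/2)^r"
    using Suc.prems by (simp add: trace_csmult trace_dephase)
  then show ?case
    by (simp add: EH_0_0_kron EHO_kron_balanced balanced csmult_def vec_eq_iff)
qed

definition vstate :: "complex^'n \<Rightarrow> complex^'n^'n \<Rightarrow> complex" where
  "vstate w A = cinner w (A *v w)"

lemma vstate_csmult: "vstate w (csmult c A) = c * vstate w A"
  by (simp add: vstate_def cinner_def csmult_def matrix_vector_mult_def sum_distrib_left mult_ac)

lemma vstate_add: "vstate w (A + B) = vstate w A + vstate w B"
  by (simp add: vstate_def matrix_vector_mult_add_rdistrib cinner_add_right)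

lemma vstate_adj_mult_self: "vstate w (adj A ** A) = of_real ((norm (A *v w))\<^sup>2)"
  by (simp add: vstate_def cinner_adj_mult cinner_self flip: matrix_vector_mul_assoc)

lemma cstate_vstate: "norm w = 1 \<Longrightarrow> cstate (vstate w)"
  by (simp add: cstate_def vstate_add vstate_csmult vstate_adj_mult_self)
    (simp add: vstate_def cinner_self)

lemma norm_eq_1_iff_cinner: "norm u = 1 \<longleftrightarrow> cinner u u = 1"
  unfolding cinner_self of_real_eq_1_iff using power2_eq_iff_nonneg[of "norm u" 1] by simp

definition ket_diag :: cvec where
  "ket_diag = (\<chi> _. of_real (1 / sqrt 2))"

lemma ket_diag_mult: "ket_diag $ i * ket_diag $ j = 1/2"
  by (simp add: ket_diag_def flip: of_real_mult)

lemma cnj_ket_diag: "cnj (ket_diag $ i) = ket_diag $ i"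
  by (simp add: ket_diag_def)

lemma norm_ket_diag: "norm ket_diag = 1"
  by (simp add: norm_eq_1_iff_cinner cinner_def sum_2 cnj_ket_diag ket_diag_mult)

lemma outer_ket_diag_offdiag: "outer ket_diag ket_diag $0$1 = 1/2"
  by (simp add: outer_def cnj_ket_diag ket_diag_mult)

lemma vstate_ket_diag_dephase:
  "vstate ket_diag (dephase c p) = (trace p + of_real c * (p$0$1 + p$1$0)) / 2"
  using ket_diag_mult[of 0 0] ket_diag_mult[of 0 1] ket_diag_mult[of 1 0] ket_diag_mult[of 1 1]
  by (simp add: vstate_def cinner_def matrix_vector_mult_def dephase_def trace_def sum_2 cnj_ket_diag)
    algebra

lemma Re_Fn_dephasing_model:
  assumes "\<bar>et\<bar> \<le> 1" and "cinner ep (q *v ep) = 1/2" and "cinner em (q *v em) = 1/2"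
    and "\<forall>m\<le>n. ps m \<in> P1"
  shows "Re (Fn n (\<lambda>_. 0) (\<lambda>_. 0) (\<lambda>_. et) ep em (\<lambda>_. q) (vstate ket_diag) ps)
    = 1 / 2^(n+1) + sqrt (1 - et\<^sup>2) / 2^n * Re (ps 0 $0$1)"
proof -
  have "ps 0 \<in> P1"
    using assms(4) by simp
  moreover have "chain (\<lambda>_. 0) (\<lambda>_. 0) (\<lambda>_. et) ep em (\<lambda>_. q) ps n 0
      = csmult ((1/2)^n) (dephase (sqrt (1 - et\<^sup>2)) (ps 0))"
    using assms by (intro chain_dephase) (auto simp: P1_trace)
  ultimately show ?thesis
    by (simp add: Fn_def vstate_csmult vstate_ket_diag_dephase P1_trace P1_hermitian
        complex_add_cnj power_divide; simp add: field_simps)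
qed

lemma balanced_projection_exists:
  assumes "norm ep = 1" and "norm em = 1" and "cinner ep em = 0"
  obtains q where "q \<in> P1" and "cinner ep (q *v ep) = 1/2" and "cinner em (q *v em) = 1/2"
proof -
  define r :: real where "r = 1 / sqrt 2"
  have half: "complex_of_real r * complex_of_real r = 1/2"
    by (simp add: r_def flip: of_real_mult)
  define v where "v = r *\<^sub>R (ep + em)"
  have "cinner ep ep = 1" "cinner em em = 1" "cinner em ep = 0"
    using assms by (simp_all add: cinner_self cinner_commute[of em])
  then have proj: "cinner ep v = of_real r" "cinner em v = of_real r"
    using assms(3) by (simp_all add: v_def cinner_scaleR_right cinner_add_right)
  have "cinner v v = of_real r * (cinner ep v + cinner em v)"
    by (subst (1) v_def) (simp add: cinner_scaleR_left cinner_add_left)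
  also have "\<dots> = 2 * (of_real r * of_real r)"
    by (simp add: proj)
  finally have "norm v = 1"
    by (simp add: half norm_eq_1_iff_cinner)
  then have "outer v v \<in> P1"
    by (auto simp: P1_def)
  have expect: "cinner e (outer v v *v e) = cnj (cinner e v) * cinner e v" for e
    by (simp add: outer_mult_vec cinner_scalar_mult_right cinner_commute[of v])
  show ?thesis
    using \<open>outer v v \<in> P1\<close>
    by (rule that) (simp_all only: expect proj half complex_cnj_complex_of_real)
qed

lemma Sup_affine_offdiag_P1:
  fixes f :: "(nat \<Rightarrow> cmat) \<Rightarrow> real"
  assumes f: "\<And>ps. \<forall>m\<le>n. ps m \<in> P1 \<Longrightarrow> f ps = a + b * Re (ps 0 $0$1)" and "0 \<le> b"
  shows "Sup {f ps | ps. \<forall>m\<le>n. ps m \<in> P1} = a + b / 2"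
proof (rule cSup_eq_maximum)
  have "\<forall>m\<le>n. (\<lambda>_. outer ket_diag ket_diag) m \<in> P1"
    using norm_ket_diag by (auto simp: P1_def)
  then show "a + b / 2 \<in> {f ps | ps. \<forall>m\<le>n. ps m \<in> P1}"
    by (auto intro!: exI[of _ "\<lambda>_. outer ket_diag ket_diag"] simp: f outer_ket_diag_offdiag)
next
  fix x
  assume "x \<in> {f ps | ps. \<forall>m\<le>n. ps m \<in> P1}"
  then obtain ps where "x = f ps" and "\<forall>m\<le>n. ps m \<in> P1"
    by blast
  then show "x \<le> a + b / 2"
    using P1_Re_offdiag_le[of "ps 0"] mult_left_mono[OF _ \<open>0 \<le> b\<close>] by (fastforce simp: f)
qed

lemma DH_subset_P1: "DH \<subseteq> P1"
proof -
  have "norm ket0 = 1" "norm ket1 = 1"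
    by (simp_all add: norm_eq_1_iff_cinner cinner_def sum_2 ket0_def ket1_def axis_def)
  then show ?thesis
    by (auto simp: DH_def P1_def)
qed

lemma DH_offdiag: "p \<in> DH \<Longrightarrow> p$0$1 = 0"
  by (auto simp: DH_def outer_def ket0_def ket1_def axis_def)

lemma Sup_affine_offdiag_DH:
  fixes f :: "(nat \<Rightarrow> cmat) \<Rightarrow> real"
  assumes f: "\<And>ps. \<forall>m\<le>n. ps m \<in> P1 \<Longrightarrow> f ps = a + b * Re (ps 0 $0$1)"
  shows "Sup {f ps | ps. \<forall>m\<le>n. ps m \<in> DH} = a"
proof (rule cSup_eq_maximum)
  have "\<forall>m\<le>n. (\<lambda>_. outer ket0 ket0) m \<in> DH"
    by (simp add: DH_def)
  with DH_subset_P1 show "a \<in> {f ps | ps. \<forall>m\<le>n. ps m \<in> DH}"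
    by (auto intro!: exI[of _ "\<lambda>_. outer ket0 ket0"] simp: f outer_def ket0_def axis_def)
next
  fix x
  assume "x \<in> {f ps | ps. \<forall>m\<le>n. ps m \<in> DH}"
  then obtain ps where "x = f ps" and ps: "\<forall>m\<le>n. ps m \<in> DH"
    by blast
  moreover from ps DH_subset_P1 have "\<forall>m\<le>n. ps m \<in> P1"
    by blast
  moreover from ps have "ps 0 $0$1 = 0"
    by (meson DH_offdiag le0)
  ultimately show "x \<le> a"
    by (simp add: f)
qed

theorem mainTheorem3:
  fixes n :: nat and ep em :: "complex^2"
  assumes "n \<ge> 1" and "norm ep = 1" and "norm em = 1" and "cinner ep em = 0"
  shows "\<exists>(th::nat \<Rightarrow> real) (ph::nat \<Rightarrow> real) (et::nat \<Rightarrow> real) (q::nat \<Rightarrow> cmat) (phi0::cmat \<Rightarrow> complex).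
     (\<forall>m\<le>n. 0 \<le> th m \<and> th m \<le> 1 \<and> 0 < et m \<and> et m < 1 \<and> q m \<in> P1) \<and> cstate phi0 \<and>
     Sup {Re (Fn n th ph et ep em q phi0 ps) | ps. \<forall>m\<le>n. ps m \<in> P1}
       > Sup {Re (Fn n th ph et ep em q phi0 ps) | ps. \<forall>m\<le>n. ps m \<in> DH} \<and>
     (\<forall>ps. (\<forall>m\<le>n. ps m \<in> P1) \<and>
        Re (Fn n th ph et ep em q phi0 ps) = Sup {Re (Fn n th ph et ep em q phi0 ps') | ps'. \<forall>m\<le>n. ps' m \<in> P1}
        \<longrightarrow> ps 0 $ 0 $ 1 \<noteq> 0)"
proof -
  (* the construction works for every n *)
  obtain q where q: "q \<in> P1" "cinner ep (q *v ep) = 1/2" "cinner em (q *v em) = 1/2"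
    using balanced_projection_exists assms(2-4) by blast
  define b where "b = (sqrt (1 - (1/2)\<^sup>2) / 2^n :: real)"
  let ?F = "\<lambda>ps. Re (Fn n (\<lambda>_. 0) (\<lambda>_. 0) (\<lambda>_. 1/2) ep em (\<lambda>_. q) (vstate ket_diag) ps)"
  have F: "?F ps = 1 / 2^(n+1) + b * Re (ps 0 $0$1)" if "\<forall>m\<le>n. ps m \<in> P1" for ps
    using Re_Fn_dephasing_model[OF _ q(2,3) that] by (simp add: b_def)
  have "b > 0"
    by (simp add: b_def power2_eq_square)
  have sup_P1: "Sup {?F ps | ps. \<forall>m\<le>n. ps m \<in> P1} = 1 / 2^(n+1) + b / 2"
    using \<open>b > 0\<close> by (intro Sup_affine_offdiag_P1 F) auto
  have sup_DH: "Sup {?F ps | ps. \<forall>m\<le>n. ps m \<in> DH} = 1 / 2^(n+1)"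
    by (rule Sup_affine_offdiag_DH[where b = b]) (rule F)
  show ?thesis
    apply (rule exI[of _ "\<lambda>_. 0"], rule exI[of _ "\<lambda>_. 0"], rule exI[of _ "\<lambda>_. 1/2"],
        rule exI[of _ "\<lambda>_. q"], rule exI[of _ "vstate ket_diag"])
    using q(1) cstate_vstate[OF norm_ket_diag] sup_P1 sup_DH F \<open>b > 0\<close> by auto
qed

end
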